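(* For each of the following groups $G$ of order $24$ there exists a $(G,[1^3,2^2,17],12)$ Hadamard partitioned difference family: (a) $C_3\rtimes C_8=\langle a,b \mid a^8=b^3=1,\ ab^{-1}=ba\rangle$; (b) $SL(2,3)$, the group of $2\times 2$ matrices over $\mathbb{Z}_3$ of determinant $1$; (c) $\mathbb{Z}_3\times D_8$.
   Context: For a finite group $G$ (written additively, or multiplicatively in which case the difference of $x$ and $y$ is $xy^{-1}$), and $B\subseteq G$, $\Delta B$ is the multiset of differences of ordered pairs of distinct elements of $B$; for $\mathcal{F}=\{B_1,\dots,B_t\}$, $\Delta\mathcal{F}$ is the multiset union of the $\Delta B_i$. $\mathcal{F}$ is a $(G,[k_1,\dots,k_t],\lambda)$ partitioned difference family if the $B_i$ partition $G$, $|B_i|=k_i$, and $\Delta\mathcal{F}$ contains every non-identity element of $G$ exactly $\lambda$ times; it is Hadamard if $|G|=2\lambda$. Exponents in $[1^3,2^2,17]$ denote multiplicities (three blocks of size 1, two of size 2, one of size 17). $D_{2n}=\langle x,y\mid x^n=1,\ y^2=1,\ yx^i=x^{-i}y\rangle$ is the dihedral group of order $2n$, so $D_8$ has order $8$. *)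

theory Defs
  imports "HOL-Algebra.Group"
begin

definition diff_count :: "('a, 'b) monoid_scheme \<Rightarrow> 'a set \<Rightarrow> 'a \<Rightarrow> nat" where
  "diff_count G B g = card {(x, y). x \<in> B \<and> y \<in> B \<and> x \<noteq> y \<and> x \<otimes>\<^bsub>G\<^esub> inv\<^bsub>G\<^esub> y = g}"

definition is_PDF :: "('a, 'b) monoid_scheme \<Rightarrow> 'a set list \<Rightarrow> nat list \<Rightarrow> nat \<Rightarrow> bool" where
  "is_PDF G F ks lam \<longleftrightarrow>
     length F = length ks \<and>
     (\<forall>i < length F. F ! i \<subseteq> carrier G \<and> F ! i \<noteq> {} \<and> finite (F ! i) \<and> card (F ! i) = ks ! i) \<and>
     (\<forall>i < length F. \<forall>j < length F. i \<noteq> j \<longrightarrow> F ! i \<inter> F ! j = {}) \<and>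
     \<Union> (set F) = carrier G \<and>
     (\<forall>g \<in> carrier G. g \<noteq> \<one>\<^bsub>G\<^esub> \<longrightarrow> (\<Sum>i < length F. diff_count G (F ! i) g) = lam)"

definition is_Hadamard_PDF :: "('a, 'b) monoid_scheme \<Rightarrow> 'a set list \<Rightarrow> nat list \<Rightarrow> nat \<Rightarrow> bool" where
  "is_Hadamard_PDF G F ks lam \<longleftrightarrow> is_PDF G F ks lam \<and> finite (carrier G) \<and> card (carrier G) = 2 * lam"

text \<open>C_3 \<rtimes> C_8 = <a,b | a^8 = b^3 = 1, a b^-1 = b a>: the pair (j,i) stands for b^j a^i;
  a b a^-1 = b^-1, so (b^j a^i)(b^l a^k) = b^(j + (-1)^i l) a^(i+k).\<close>
definition C3_sd_C8 :: "(nat \<times> nat) monoid" where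
  "C3_sd_C8 = \<lparr>carrier = {0..<3} \<times> {0..<8},
     mult = (\<lambda>(j, i) (l, k). ((j + (if even i then l else 2 * l)) mod 3, (i + k) mod 8)),
     one = (0, 0)\<rparr>"

definition SL23 :: "((int \<times> int) \<times> (int \<times> int)) monoid" where
  "SL23 = \<lparr>carrier = {((a, b), (c, d)). a \<in> {0..2} \<and> b \<in> {0..2} \<and> c \<in> {0..2} \<and> d \<in> {0..2}
                                        \<and> (a * d - b * c) mod 3 = 1},
     mult = (\<lambda>((a, b), (c, d)) ((e, f), (g, h)).
               (((a * e + b * g) mod 3, (a * f + b * h) mod 3),
                ((c * e + d * g) mod 3, (c * f + d * h) mod 3))),
     one = ((1, 0), (0, 1))\<rparr>"

text \<open>Z_3 \<times> D_8, D_8 = <x,y | x^4 = 1, y^2 = 1, y x^i = x^-i y>: the triple (t,i,e) stands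
  for (t, x^i y^e); (x^i y^e)(x^k y^f) = x^(i + (-1)^e k) y^(e+f).\<close>
definition Z3_x_D8 :: "(nat \<times> nat \<times> nat) monoid" where
  "Z3_x_D8 = \<lparr>carrier = {0..<3} \<times> {0..<4} \<times> {0..<2},
     mult = (\<lambda>(t, i, e) (s, k, f).
               ((t + s) mod 3, (i + (if e = 0 then k else 3 * k)) mod 4, (e + f) mod 2)),
     one = (0, 0, 0)\<rparr>"

end

theory Submission
  imports Defs
begin

text \<open>Once the 24 group elements are listed and inverses are given by closed formulas, the multiset
  of differences of every block is an explicit list, and the claim reduces to the finite check
  that each non-identity element occurs exactly 12 times in the concatenation of these lists.\<close>

lemma m_inv_eqI:
  assumes "y \<in> carrier G" "z \<in> carrier G" "y \<otimes>\<^bsub>G\<^esub> z = \<one>\<^bsub>G\<^esub>" "z \<otimes>\<^bsub>G\<^esub> y = \<one>\<^bsub>G\<^esub>"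
    and "\<And>w. w \<in> carrier G \<Longrightarrow> y \<otimes>\<^bsub>G\<^esub> w = \<one>\<^bsub>G\<^esub> \<Longrightarrow> w = z"
  shows "inv\<^bsub>G\<^esub> y = z"
  unfolding m_inv_def using assms by (intro the_equality) blast+

text \<open>The structures of the theorem are not known to be groups here, so uniqueness of right
  inverses is part of the table: it is what determines the definite description \<open>inv\<close>.\<close>
definition inverse_table :: "('a \<Rightarrow> 'a \<Rightarrow> 'a) \<Rightarrow> 'a \<Rightarrow> 'a list \<Rightarrow> ('a \<Rightarrow> 'a) \<Rightarrow> bool" where
  "inverse_table mul e xs f \<longleftrightarrow>
     (\<forall>y \<in> set xs. f y \<in> set xs \<and> mul y (f y) = e \<and> mul (f y) y = e \<and>
        (\<forall>w \<in> set xs. mul y w = e \<longrightarrow> w = f y))"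

lemma m_inv_eq_inverse_table:
  assumes "set xs = carrier G" "inverse_table (mult G) \<one>\<^bsub>G\<^esub> xs f" "y \<in> carrier G"
  shows "inv\<^bsub>G\<^esub> y = f y"
  using assms unfolding inverse_table_def by (intro m_inv_eqI) auto

definition diff_list :: "('a \<Rightarrow> 'a \<Rightarrow> 'a) \<Rightarrow> ('a \<Rightarrow> 'a) \<Rightarrow> 'a list \<Rightarrow> 'a list" where
  "diff_list mul f xs = map (\<lambda>(x, y). mul x (f y)) (filter (\<lambda>(x, y). x \<noteq> y) (List.product xs xs))"

lemma diff_count_eq_count_diff_list:
  assumes "distinct xs" "\<And>y. y \<in> set xs \<Longrightarrow> inv\<^bsub>G\<^esub> y = f y"
  shows "diff_count G (set xs) g = count_list (diff_list (mult G) f xs) g"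
proof -
  let ?pairs = "filter (\<lambda>(x, y). x \<noteq> y \<and> x \<otimes>\<^bsub>G\<^esub> f y = g) (List.product xs xs)"
  have "{(x, y). x \<in> set xs \<and> y \<in> set xs \<and> x \<noteq> y \<and> x \<otimes>\<^bsub>G\<^esub> inv\<^bsub>G\<^esub> y = g} = set ?pairs"
    using assms(2) by auto
  moreover have "distinct ?pairs"
    using assms(1) by (simp add: distinct_product)
  ultimately have "diff_count G (set xs) g = length ?pairs"
    unfolding diff_count_def by (simp only: distinct_card)
  also have "\<dots> = count_list (diff_list (mult G) f xs) g"
    unfolding diff_list_def count_list_eq_length_filter filter_map filter_filter length_map
    by (intro arg_cong[where f = length] filter_cong) auto
  finally show ?thesis .
qed

lemma disjoint_nth_if_distinct_concat:
  assumes "distinct (concat xss)" "i < length xss" "j < length xss" "i \<noteq> j"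
  shows "set (xss ! i) \<inter> set (xss ! j) = {}"
  using assms
proof (induction xss arbitrary: i j)
  case (Cons xs xss)
  have head: "set xs \<inter> set (xss ! k) = {}" if "k < length xss" for k
  proof -
    have "set (xss ! k) \<subseteq> set (concat xss)"
      using nth_mem[OF that] by auto
    moreover have "set xs \<inter> set (concat xss) = {}"
      using Cons.prems(1) by simp
    ultimately show ?thesis
      by blast
  qed
  show ?case
    using Cons.prems head Cons.IH[of "i - 1" "j - 1"] by (cases i; cases j) auto
qed simp

text \<open>Only the multiplication and the unit enter, so that \<open>code_simp\<close> can evaluate a
  certificate: the carriers of the structures are set comprehensions and not executable.\<close>
definition PDF_certificate ::
    "('a \<Rightarrow> 'a \<Rightarrow> 'a) \<Rightarrow> 'a \<Rightarrow> 'a list \<Rightarrow> ('a \<Rightarrow> 'a) \<Rightarrow> 'a list list \<Rightarrow> nat list \<Rightarrow> nat \<Rightarrow> bool" where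
  "PDF_certificate mul e xs f Fl ks lam \<longleftrightarrow>
     inverse_table mul e xs f \<and>
     map length Fl = ks \<and> [] \<notin> set Fl \<and> distinct (concat Fl) \<and> set (concat Fl) = set xs \<and>
     (\<forall>g \<in> set xs. g \<noteq> e \<longrightarrow> count_list (concat (map (diff_list mul f) Fl)) g = lam)"

lemma is_PDF_if_certificate:
  assumes carrier: "set xs = carrier G" and cert: "PDF_certificate (mult G) \<one>\<^bsub>G\<^esub> xs f Fl ks lam"
  shows "is_PDF G (map set Fl) ks lam"
proof -
  have table: "inverse_table (mult G) \<one>\<^bsub>G\<^esub> xs f"
    and blocks: "map length Fl = ks" "[] \<notin> set Fl" "distinct (concat Fl)" "set (concat Fl) = carrier G"
    and counts: "\<And>g. g \<in> carrier G \<Longrightarrow> g \<noteq> \<one>\<^bsub>G\<^esub> \<Longrightarrow>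
                   count_list (concat (map (diff_list (mult G) f) Fl)) g = lam"
    using cert unfolding PDF_certificate_def carrier by blast+
  have inv: "inv\<^bsub>G\<^esub> y = f y" if "y \<in> carrier G" for y
    using carrier table that by (rule m_inv_eq_inverse_table)
  have distinct_block: "distinct xs" if "xs \<in> set Fl" for xs
    using blocks(3) that by (simp add: distinct_concat_iff)
  have block_carrier: "set xs \<subseteq> carrier G" if "xs \<in> set Fl" for xs
    using blocks(4) that by auto
  have sum_diff_count: "(\<Sum>i < length Fl. diff_count G (map set Fl ! i) g) = lam"
    if "g \<in> carrier G" "g \<noteq> \<one>\<^bsub>G\<^esub>" for g
  proof -
    have "(\<Sum>i < length Fl. diff_count G (map set Fl ! i) g) = (\<Sum>B \<leftarrow> map set Fl. diff_count G B g)"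
      by (simp add: sum_list_sum_nth atLeast0LessThan)
    also have "\<dots> = (\<Sum>xs \<leftarrow> Fl. diff_count G (set xs) g)"
      by (simp add: comp_def)
    also have "\<dots> = (\<Sum>xs \<leftarrow> Fl. count_list (diff_list (mult G) f xs) g)"
      using distinct_block block_carrier inv
      by (intro arg_cong[where f = sum_list] map_cong refl diff_count_eq_count_diff_list) auto
    also have "\<dots> = lam"
      using counts[OF that] by (simp add: count_list_concat comp_def)
    finally show ?thesis .
  qed
  show ?thesis
    unfolding is_PDF_def length_map
  proof (intro conjI allI impI ballI)
    show "length Fl = length ks"
      using blocks(1) by auto
    show "\<Union> (set (map set Fl)) = carrier G"
      using blocks(4) by simp
  next
    fix i assume i: "i < length Fl"
    then have block: "Fl ! i \<in> set Fl"
      by simp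
    show "map set Fl ! i \<subseteq> carrier G"
      using block_carrier[OF block] i by simp
    have "Fl ! i \<noteq> []"
      using block blocks(2) by auto
    then show "map set Fl ! i \<noteq> {}"
      using i by simp
    show "finite (map set Fl ! i)"
      using i by simp
    show "card (map set Fl ! i) = ks ! i"
      using distinct_block[OF block] blocks(1) i by (auto simp: distinct_card)
  next
    fix i j assume "i < length Fl" "j < length Fl" "i \<noteq> j"
    then show "map set Fl ! i \<inter> map set Fl ! j = {}"
      using blocks(3) disjoint_nth_if_distinct_concat by simp
  next
    fix g assume "g \<in> carrier G" "g \<noteq> \<one>\<^bsub>G\<^esub>"
    then show "(\<Sum>i < length Fl. diff_count G (map set Fl ! i) g) = lam"
      by (rule sum_diff_count)
  qed
qed

lemma is_Hadamard_PDF_if_certificate: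
  assumes carrier: "set xs = carrier G" and cert: "PDF_certificate (mult G) \<one>\<^bsub>G\<^esub> xs f Fl ks lam"
    and "sum_list ks = 2 * lam"
  shows "is_Hadamard_PDF G (map set Fl) ks lam"
proof -
  have blocks: "distinct (concat Fl)" "set (concat Fl) = carrier G" "map length Fl = ks"
    using carrier cert by (auto simp: PDF_certificate_def)
  have "finite (carrier G)"
    unfolding carrier[symmetric] by simp
  have "card (carrier G) = length (concat Fl)"
    unfolding blocks(2)[symmetric] using blocks(1) by (rule distinct_card)
  also have "\<dots> = 2 * lam"
    using blocks(3) \<open>sum_list ks = 2 * lam\<close> by (simp add: length_concat)
  finally show ?thesis
    using is_PDF_if_certificate[OF carrier cert] \<open>finite (carrier G)\<close>
    unfolding is_Hadamard_PDF_def by blast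
qed

definition complement_family :: "'a list \<Rightarrow> 'a list list \<Rightarrow> 'a list list" where
  "complement_family xs Bs = Bs @ [filter (\<lambda>x. x \<notin> set (concat Bs)) xs]"

definition elems_C3_sd_C8 :: "(nat \<times> nat) list" where
  "elems_C3_sd_C8 = List.product [0..<3] [0..<8]"

definition inv_C3_sd_C8 :: "nat \<times> nat \<Rightarrow> nat \<times> nat" where
  "inv_C3_sd_C8 = (\<lambda>(j, i). (if even i then (3 - j) mod 3 else j, (8 - i) mod 8))"

definition family_C3_sd_C8 :: "(nat \<times> nat) list list" where
  "family_C3_sd_C8 = complement_family elems_C3_sd_C8
     [[(0, 0)], [(0, 2)], [(0, 4)], [(0, 1), (2, 2)], [(1, 0), (1, 5)]]"

lemma set_elems_C3_sd_C8: "set elems_C3_sd_C8 = carrier C3_sd_C8"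
  by (simp add: elems_C3_sd_C8_def C3_sd_C8_def)

lemma PDF_certificate_C3_sd_C8:
  "PDF_certificate (mult C3_sd_C8) \<one>\<^bsub>C3_sd_C8\<^esub> elems_C3_sd_C8 inv_C3_sd_C8 family_C3_sd_C8 [1, 1, 1, 2, 2, 17] 12"
  unfolding C3_sd_C8_def monoid.select_convs by code_simp

definition elems_SL23 :: "((int \<times> int) \<times> (int \<times> int)) list" where
  "elems_SL23 = filter (\<lambda>((a, b), (c, d)). (a * d - b * c) mod 3 = 1)
     (List.product (List.product [0..2] [0..2]) (List.product [0..2] [0..2]))"

text \<open>The adjugate, since the determinant is 1.\<close>
definition inv_SL23 :: "(int \<times> int) \<times> (int \<times> int) \<Rightarrow> (int \<times> int) \<times> (int \<times> int)" where
  "inv_SL23 = (\<lambda>((a, b), (c, d)). ((d, - b mod 3), (- c mod 3, a)))"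

definition family_SL23 :: "((int \<times> int) \<times> (int \<times> int)) list list" where
  "family_SL23 = complement_family elems_SL23
     [[((0, 1), (2, 0))], [((0, 2), (1, 0))], [((2, 1), (1, 1))],
      [((0, 1), (2, 1)), ((1, 0), (1, 1))], [((2, 0), (1, 2)), ((2, 1), (2, 0))]]"

lemma set_elems_SL23: "set elems_SL23 = carrier SL23"
  by (auto simp: elems_SL23_def SL23_def)

lemma PDF_certificate_SL23:
  "PDF_certificate (mult SL23) \<one>\<^bsub>SL23\<^esub> elems_SL23 inv_SL23 family_SL23 [1, 1, 1, 2, 2, 17] 12"
  unfolding SL23_def monoid.select_convs by code_simp

definition elems_Z3_x_D8 :: "(nat \<times> nat \<times> nat) list" where
  "elems_Z3_x_D8 = List.product [0..<3] (List.product [0..<4] [0..<2])"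

definition inv_Z3_x_D8 :: "nat \<times> nat \<times> nat \<Rightarrow> nat \<times> nat \<times> nat" where
  "inv_Z3_x_D8 = (\<lambda>(t, i, e). ((3 - t) mod 3, if e = 0 then (4 - i) mod 4 else i, e))"

definition family_Z3_x_D8 :: "(nat \<times> nat \<times> nat) list list" where
  "family_Z3_x_D8 = complement_family elems_Z3_x_D8
     [[(0, 0, 0)], [(0, 2, 0)], [(1, 0, 0)], [(0, 0, 1), (2, 1, 0)], [(0, 1, 0), (2, 2, 1)]]"

lemma set_elems_Z3_x_D8: "set elems_Z3_x_D8 = carrier Z3_x_D8"
  by (simp add: elems_Z3_x_D8_def Z3_x_D8_def)

lemma PDF_certificate_Z3_x_D8:
  "PDF_certificate (mult Z3_x_D8) \<one>\<^bsub>Z3_x_D8\<^esub> elems_Z3_x_D8 inv_Z3_x_D8 family_Z3_x_D8 [1, 1, 1, 2, 2, 17] 12"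
  unfolding Z3_x_D8_def monoid.select_convs by code_simp

theorem mainTheorem10:
  shows "(\<exists>F. is_Hadamard_PDF C3_sd_C8 F [1, 1, 1, 2, 2, 17] 12)
       \<and> (\<exists>F. is_Hadamard_PDF SL23 F [1, 1, 1, 2, 2, 17] 12)
       \<and> (\<exists>F. is_Hadamard_PDF Z3_x_D8 F [1, 1, 1, 2, 2, 17] 12)"
  using is_Hadamard_PDF_if_certificate[OF set_elems_C3_sd_C8 PDF_certificate_C3_sd_C8]
    is_Hadamard_PDF_if_certificate[OF set_elems_SL23 PDF_certificate_SL23]
    is_Hadamard_PDF_if_certificate[OF set_elems_Z3_x_D8 PDF_certificate_Z3_x_D8]
  by auto

end
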